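(* For each $\kappa>0$ there exists a constant $D_{\max}(\kappa)$ such that if $D>D_{\max}(\kappa)$ then the functional $\mathcal J$ is globally convex on $W^{1,2}(\mathbb{T})$.
   Context: $\mathbb{T}=[0,1]$ with endpoints identified; $D>0,\kappa>0$; $$\mathcal J(u)=\frac D2\int_0^1|u_x|^2dx+\frac12\int_0^1u^2dx-\kappa\log\Big(\int_0^1e^udx\Big),\qquad u\in W^{1,2}(\mathbb{T}).$$ *)

theory Defs
  imports "HOL-Analysis.Analysis"
begin

text \<open>An element of W^{1,2}(T), T = [0,1] with endpoints identified, represented by its
  absolutely continuous representative u together with its (weak) derivative g:
  g is square integrable on [0,1], u(x) = u(0) + int_0^x g for x in [0,1], and u(0) = u(1).\<close>
definition W12T :: "(real \<Rightarrow> real) \<Rightarrow> (real \<Rightarrow> real) \<Rightarrow> bool" where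
  "W12T u g \<longleftrightarrow>
     g integrable_on {0..1} \<and> (\<lambda>x. (g x)^2) integrable_on {0..1} \<and>
     (\<forall>x\<in>{0..1}. u x = u 0 + integral {0..x} g) \<and> u 0 = u 1"

definition Jfun :: "real \<Rightarrow> real \<Rightarrow> (real \<Rightarrow> real) \<Rightarrow> (real \<Rightarrow> real) \<Rightarrow> real" where
  "Jfun D \<kappa> u g =
     D / 2 * integral {0..1} (\<lambda>x. (g x)^2) + 1 / 2 * integral {0..1} (\<lambda>x. (u x)^2)
     - \<kappa> * ln (integral {0..1} (\<lambda>x. exp (u x)))"

text \<open>Global convexity of J on W^{1,2}(T): the derivative of a convex combination is
  the convex combination of derivatives.\<close>
definition J_globally_convex :: "real \<Rightarrow> real \<Rightarrow> bool" where
  "J_globally_convex D \<kappa> \<longleftrightarrow>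
     (\<forall>u1 g1 u2 g2 t. W12T u1 g1 \<longrightarrow> W12T u2 g2 \<longrightarrow> 0 \<le> t \<longrightarrow> t \<le> 1 \<longrightarrow>
        Jfun D \<kappa> (\<lambda>x. t * u1 x + (1 - t) * u2 x) (\<lambda>x. t * g1 x + (1 - t) * g2 x)
          \<le> t * Jfun D \<kappa> u1 g1 + (1 - t) * Jfun D \<kappa> u2 g2)"

end

theory Submission
  imports Defs "HOL-Probability.Hoeffding"
begin

(* Write J = (D/2) G + (1/2) U - kappa L with G, U the integrals of u_x^2 and u^2 and
   L u = ln (int exp u).  Along the segment u_t = t u1 + (1 - t) u2 the defect
   t G(u1) + (1 - t) G(u2) - G(u_t) equals t (1 - t) int (g1 - g2)^2, U is convex, and
   L is convex but only mildly so: by Hoeffding's lemma, applied to the probability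
   density proportional to exp u_t and the variable w = u1 - u2, its convexity defect is at
   most t (1 - t) (osc w)^2 / 8.  By Cauchy-Schwarz, w ranges in an interval of length
   2 (int (g1 - g2)^2)^(1/2), so the defect of kappa L is at most kappa t (1 - t) int (g1 - g2)^2 / 2,
   which the gradient term absorbs as soon as D >= kappa. *)

lemma ln_bernoulli_mgf_le:
  fixes h p :: real
  assumes "0 \<le> p" and "p \<le> 1"
  shows "ln (1 + p * (exp h - 1)) \<le> h * p + h\<^sup>2 / 8"
proof (cases "0 \<le> h")
  case True
  then show ?thesis using Hoeffdings_lemma_aux[OF True \<open>0 \<le> p\<close>] by simp
next
  case False
  \<comment> \<open>The library lemma needs \<open>h \<ge> 0\<close>; exchanging the two atoms turns \<open>(h, p)\<close> into \<open>(-h, 1 - p)\<close>.\<close>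
  have "-h \<ge> 0" "1 - p \<ge> 0" using False assms by auto
  note reflected = Hoeffdings_lemma_aux[OF this]
  have "(1 - p) * (exp (- h) - 1) \<ge> 0"
    using False assms by (intro mult_nonneg_nonneg) auto
  then have pos: "0 < 1 + (1 - p) * (exp (- h) - 1)" by linarith
  have "1 + p * (exp h - 1) = exp h * (1 + (1 - p) * (exp (- h) - 1))"
    by (simp add: algebra_simps exp_minus)
  then have "ln (1 + p * (exp h - 1)) = h + ln (1 + (1 - p) * (exp (- h) - 1))"
    using pos by (simp add: ln_mult)
  then show ?thesis using reflected by (simp add: algebra_simps)
qed

lemma Hoeffding_two_point:
  fixes a b m l :: real
  assumes "a \<le> m" and "m \<le> b"
  shows "(b - m) * exp (l * a) + (m - a) * exp (l * b) \<le> (b - a) * exp (l * m + l\<^sup>2 * (b - a)\<^sup>2 / 8)"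
proof (cases "a = b")
  case False
  then have ab: "a < b" using assms by simp
  define p where "p = (m - a) / (b - a)"
  define h where "h = l * (b - a)"
  have "0 \<le> p" "p \<le> 1" using ab assms by (auto simp: p_def field_simps)
  have "(b - m) * exp (l * a) + (m - a) * exp (l * b) = (b - a) * exp (l * a) * (1 + p * (exp h - 1))"
    using ab by (simp add: p_def h_def field_simps flip: exp_add)
  also have "\<dots> \<le> (b - a) * exp (l * a) * exp (h * p + h\<^sup>2 / 8)"
  proof -
    have "0 < (1 - p) + p * exp h"
      using \<open>0 \<le> p\<close> \<open>p \<le> 1\<close> by (cases "p = 0") (auto intro: add_nonneg_pos)
    then have "0 < 1 + p * (exp h - 1)" by (simp add: algebra_simps)
    then have "1 + p * (exp h - 1) \<le> exp (h * p + h\<^sup>2 / 8)"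
      using ln_bernoulli_mgf_le[OF \<open>0 \<le> p\<close> \<open>p \<le> 1\<close>, of h] by (metis exp_le_cancel_iff exp_ln)
    then show ?thesis using ab by simp
  qed
  also have "\<dots> = (b - a) * exp (l * m + l\<^sup>2 * (b - a)\<^sup>2 / 8)"
  proof -
    have "l * a + (h * p + h\<^sup>2 / 8) = l * m + l\<^sup>2 * (b - a)\<^sup>2 / 8"
      using ab by (simp add: p_def h_def field_simps power2_eq_square)
    then show ?thesis by (simp add: mult.assoc flip: exp_add)
  qed
  finally show ?thesis .
qed (use assms in simp)

lemma exp_le_chord:
  fixes a b y l :: real
  assumes "a \<le> y" and "y \<le> b"
  shows "(b - a) * exp (l * y) \<le> (b - y) * exp (l * a) + (y - a) * exp (l * b)"
proof (cases "a = b")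
  case False
  then have ab: "a < b" using assms by simp
  define s where "s = (y - a) / (b - a)"
  have "0 \<le> s" "s \<le> 1" using ab assms by (auto simp: s_def field_simps)
  have y: "y = a + s * (b - a)"
    using ab by (simp add: s_def)
  have "l * y = (1 - s) * (l * a) + s * (l * b)"
    unfolding y by (simp add: algebra_simps)
  then have "exp (l * y) \<le> (1 - s) * exp (l * a) + s * exp (l * b)"
    using convex_onD[OF exp_convex, of s "l * a" "l * b"] \<open>0 \<le> s\<close> \<open>s \<le> 1\<close> by simp
  then have "(b - a) * exp (l * y) \<le> (b - a) * ((1 - s) * exp (l * a) + s * exp (l * b))"
    using ab by simp
  also have "\<dots> = (b - y) * exp (l * a) + (y - a) * exp (l * b)"
    unfolding y by (simp add: algebra_simps)
  finally show ?thesis .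
qed (use assms in simp)

lemma integral_exp_le_chord:
  fixes \<rho> w :: "real \<Rightarrow> real" and S :: "real set" and a b l :: real
  defines "Z \<equiv> integral S \<rho>" and "P \<equiv> integral S (\<lambda>x. \<rho> x * w x)"
  assumes \<rho>: "\<rho> integrable_on S" and \<rho>w: "(\<lambda>x. \<rho> x * w x) integrable_on S"
    and \<rho>e: "(\<lambda>x. \<rho> x * exp (l * w x)) integrable_on S"
    and nonneg: "\<And>x. x \<in> S \<Longrightarrow> 0 \<le> \<rho> x" and range: "\<And>x. x \<in> S \<Longrightarrow> a \<le> w x \<and> w x \<le> b"
  shows "(b - a) * integral S (\<lambda>x. \<rho> x * exp (l * w x))
    \<le> (b * Z - P) * exp (l * a) + (P - a * Z) * exp (l * b)"
proof -
  have chord_eq: "\<rho> x * ((b - w x) * exp (l * a) + (w x - a) * exp (l * b))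
      = (b * exp (l * a) - a * exp (l * b)) * \<rho> x + (exp (l * b) - exp (l * a)) * (\<rho> x * w x)" for x
    by (simp add: algebra_simps)
  have "(b - a) * integral S (\<lambda>x. \<rho> x * exp (l * w x))
      = integral S (\<lambda>x. (b - a) * (\<rho> x * exp (l * w x)))"
    by simp
  also have "\<dots> \<le> integral S (\<lambda>x. \<rho> x * ((b - w x) * exp (l * a) + (w x - a) * exp (l * b)))"
  proof (rule integral_le)
    show "(\<lambda>x. (b - a) * (\<rho> x * exp (l * w x))) integrable_on S"
      using \<rho>e by (rule integrable_on_mult_right)
    show "(\<lambda>x. \<rho> x * ((b - w x) * exp (l * a) + (w x - a) * exp (l * b))) integrable_on S"
      unfolding chord_eq using \<rho> \<rho>w by (intro integrable_add integrable_on_mult_right)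
    show "(b - a) * (\<rho> x * exp (l * w x)) \<le> \<rho> x * ((b - w x) * exp (l * a) + (w x - a) * exp (l * b))"
      if "x \<in> S" for x
      using that nonneg range exp_le_chord by (simp add: mult.left_commute mult_left_mono)
  qed
  also have "\<dots> = integral S (\<lambda>x. (b * exp (l * a) - a * exp (l * b)) * \<rho> x
                                   + (exp (l * b) - exp (l * a)) * (\<rho> x * w x))"
    by (simp only: chord_eq)
  also have "\<dots> = (b * exp (l * a) - a * exp (l * b)) * Z + (exp (l * b) - exp (l * a)) * P"
    using \<rho> \<rho>w by (simp add: integral_add integrable_on_mult_right Z_def P_def)
  also have "\<dots> = (b * Z - P) * exp (l * a) + (P - a * Z) * exp (l * b)"
    by (simp add: algebra_simps)
  finally show ?thesis .
qed

lemma weighted_Hoeffding: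
  fixes \<rho> w :: "real \<Rightarrow> real" and S :: "real set" and a b l :: real
  defines "Z \<equiv> integral S \<rho>" and "P \<equiv> integral S (\<lambda>x. \<rho> x * w x)"
  assumes \<rho>: "\<rho> integrable_on S" and \<rho>w: "(\<lambda>x. \<rho> x * w x) integrable_on S"
    and \<rho>e: "(\<lambda>x. \<rho> x * exp (l * w x)) integrable_on S"
    and nonneg: "\<And>x. x \<in> S \<Longrightarrow> 0 \<le> \<rho> x" and range: "\<And>x. x \<in> S \<Longrightarrow> a \<le> w x \<and> w x \<le> b"
    and "0 < Z"
  shows "integral S (\<lambda>x. \<rho> x * exp (l * w x)) \<le> Z * exp (l * (P / Z) + l\<^sup>2 * (b - a)\<^sup>2 / 8)"
proof -
  define m where "m = P / Z"
  have weighted_range: "a * \<rho> x \<le> \<rho> x * w x \<and> \<rho> x * w x \<le> b * \<rho> x" if "x \<in> S" for x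
  proof -
    have "0 \<le> \<rho> x" "a \<le> w x" "w x \<le> b" using that nonneg range by auto
    then show ?thesis by (metis mult.commute mult_left_mono)
  qed
  have "a * Z = integral S (\<lambda>x. a * \<rho> x)" by (simp add: Z_def)
  also have "\<dots> \<le> P"
    unfolding P_def using \<rho> \<rho>w weighted_range by (intro integral_le integrable_on_mult_right) auto
  finally have "a * Z \<le> P" .
  have "P \<le> integral S (\<lambda>x. b * \<rho> x)"
    unfolding P_def using \<rho> \<rho>w weighted_range by (intro integral_le integrable_on_mult_right) auto
  also have "\<dots> = b * Z" by (simp add: Z_def)
  finally have "P \<le> b * Z" .
  have "a \<le> m" "m \<le> b"
    using \<open>a * Z \<le> P\<close> \<open>P \<le> b * Z\<close> \<open>0 < Z\<close> by (auto simp: m_def field_simps)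
  show ?thesis
  proof (cases "a = b")
    case True
    then have w_const: "\<And>x. x \<in> S \<Longrightarrow> w x = a" using range by force
    have "integral S (\<lambda>x. \<rho> x * exp (l * w x)) = integral S (\<lambda>x. exp (l * a) * \<rho> x)"
      using w_const by (intro integral_cong) simp
    moreover have "P = integral S (\<lambda>x. a * \<rho> x)"
      unfolding P_def using w_const by (intro integral_cong) simp
    ultimately show ?thesis using True \<open>0 < Z\<close> by (simp add: Z_def)
  next
    case False
    have "(b - a) * integral S (\<lambda>x. \<rho> x * exp (l * w x))
        \<le> (b * Z - P) * exp (l * a) + (P - a * Z) * exp (l * b)"
      unfolding Z_def P_def using assms by (intro integral_exp_le_chord)
    also have "\<dots> = Z * ((b - m) * exp (l * a) + (m - a) * exp (l * b))"
      using \<open>0 < Z\<close> by (simp add: m_def algebra_simps)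
    also have "\<dots> \<le> (b - a) * (Z * exp (l * m + l\<^sup>2 * (b - a)\<^sup>2 / 8))"
      using Hoeffding_two_point[OF \<open>a \<le> m\<close> \<open>m \<le> b\<close>, of l] \<open>0 < Z\<close> by (simp add: ac_simps)
    finally show ?thesis
      using False \<open>a \<le> m\<close> \<open>m \<le> b\<close> by (simp add: m_def)
  qed
qed

lemma integral_pos_continuous:
  fixes f :: "real \<Rightarrow> real"
  assumes "a < b" and "continuous_on {a..b} f" and "\<And>x. x \<in> {a..b} \<Longrightarrow> 0 < f x"
  shows "0 < integral {a..b} f"
proof -
  obtain x0 where x0: "x0 \<in> {a..b}" "\<And>y. y \<in> {a..b} \<Longrightarrow> f x0 \<le> f y"
    using continuous_attains_inf[OF compact_Icc _ assms(2)] assms(1) by auto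
  have "0 < f x0 * (b - a)" using assms(1,3) x0(1) by simp
  also have "\<dots> = integral {a..b} (\<lambda>_. f x0)" using assms(1) by simp
  also have "\<dots> \<le> integral {a..b} f"
    using x0 assms(2) by (intro integral_le integrable_continuous_interval) auto
  finally show ?thesis .
qed

lemma ln_integral_exp_convexity_defect_le:
  fixes u1 u2 :: "real \<Rightarrow> real" and c d a b t :: real
  assumes "c < d" and cont1: "continuous_on {c..d} u1" and cont2: "continuous_on {c..d} u2"
    and range: "\<And>x. x \<in> {c..d} \<Longrightarrow> a \<le> u1 x - u2 x \<and> u1 x - u2 x \<le> b"
    and "0 \<le> t" and "t \<le> 1"
  shows "t * ln (integral {c..d} (\<lambda>x. exp (u1 x))) + (1 - t) * ln (integral {c..d} (\<lambda>x. exp (u2 x)))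
    \<le> ln (integral {c..d} (\<lambda>x. exp (t * u1 x + (1 - t) * u2 x))) + t * (1 - t) * (b - a)\<^sup>2 / 8"
proof -
  define \<rho> where "\<rho> = (\<lambda>x. exp (t * u1 x + (1 - t) * u2 x))"
  define w where "w = (\<lambda>x. u1 x - u2 x)"
  define Z where "Z = integral {c..d} \<rho>"
  define m where "m = integral {c..d} (\<lambda>x. \<rho> x * w x) / Z"
  define K where "K = (b - a)\<^sup>2 / 8"
  have cont: "continuous_on {c..d} \<rho>" "continuous_on {c..d} w"
    unfolding \<rho>_def w_def by (intro continuous_intros cont1 cont2)+
  have \<rho>_pos: "0 < \<rho> x" for x by (simp add: \<rho>_def)
  have "0 < Z"
    unfolding Z_def by (rule integral_pos_continuous[OF \<open>c < d\<close> cont(1) \<rho>_pos])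
  have tilted_bound: "ln (integral {c..d} (\<lambda>x. \<rho> x * exp (l * w x))) \<le> ln Z + (l * m + l\<^sup>2 * K)" for l
  proof -
    have "0 < integral {c..d} (\<lambda>x. \<rho> x * exp (l * w x))"
      using \<open>c < d\<close> cont \<rho>_pos by (intro integral_pos_continuous continuous_intros) auto
    moreover have "integral {c..d} (\<lambda>x. \<rho> x * exp (l * w x)) \<le> Z * exp (l * m + l\<^sup>2 * (b - a)\<^sup>2 / 8)"
      unfolding Z_def m_def using \<open>0 < Z\<close>[unfolded Z_def] cont range \<rho>_pos
      by (intro weighted_Hoeffding integrable_continuous_interval continuous_intros)
         (auto simp: w_def less_imp_le)
    ultimately have "ln (integral {c..d} (\<lambda>x. \<rho> x * exp (l * w x))) \<le> ln (Z * exp (l * m + l\<^sup>2 * K))"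
      by (simp add: K_def)
    then show ?thesis
      using \<open>0 < Z\<close> by (simp add: ln_mult)
  qed
  have tilt: "exp (u1 x) = \<rho> x * exp ((1 - t) * w x)" "exp (u2 x) = \<rho> x * exp ((- t) * w x)" for x
    by (simp_all add: \<rho>_def w_def algebra_simps flip: exp_add)
  have "ln (integral {c..d} (\<lambda>x. exp (u1 x))) \<le> ln Z + ((1 - t) * m + (1 - t)\<^sup>2 * K)"
    and "ln (integral {c..d} (\<lambda>x. exp (u2 x))) \<le> ln Z + ((- t) * m + (- t)\<^sup>2 * K)"
    unfolding tilt by (rule tilted_bound)+
  then have "t * ln (integral {c..d} (\<lambda>x. exp (u1 x))) + (1 - t) * ln (integral {c..d} (\<lambda>x. exp (u2 x)))
      \<le> t * (ln Z + ((1 - t) * m + (1 - t)\<^sup>2 * K)) + (1 - t) * (ln Z + ((- t) * m + (- t)\<^sup>2 * K))"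
    using \<open>0 \<le> t\<close> \<open>t \<le> 1\<close> by (intro add_mono mult_left_mono) auto
  also have "\<dots> = ln Z + t * (1 - t) * K"
    by (simp add: power2_eq_square algebra_simps)
  finally show ?thesis by (simp add: Z_def \<rho>_def K_def)
qed

lemma square_integral_le_integral_square:
  fixes f :: "real \<Rightarrow> real"
  assumes f: "f integrable_on {a..b}" and f2: "(\<lambda>x. (f x)\<^sup>2) integrable_on {a..b}"
  shows "(integral {a..b} f)\<^sup>2 \<le> (b - a) * integral {a..b} (\<lambda>x. (f x)\<^sup>2)"
proof (cases "a < b")
  case True
  define I where "I = integral {a..b} f"
  define Q where "Q = integral {a..b} (\<lambda>x. (f x)\<^sup>2)"
  define L where "L = b - a"
  define c where "c = I / L"
  have "0 < L" using True by (simp add: L_def)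
  have expand: "(\<lambda>x. (f x - c)\<^sup>2) = (\<lambda>x. (f x)\<^sup>2 - (2 * c) * f x + c\<^sup>2)"
    by (simp add: power2_diff algebra_simps)
  have lin: "(\<lambda>x. (f x)\<^sup>2 - (2 * c) * f x) integrable_on {a..b}"
    using f f2 by (intro integrable_diff integrable_on_mult_right)
  have "(\<lambda>x. (f x - c)\<^sup>2) integrable_on {a..b}"
    unfolding expand using lin by (intro integrable_add integrable_const_ivl)
  then have "0 \<le> integral {a..b} (\<lambda>x. (f x - c)\<^sup>2)"
    by (rule integral_nonneg) simp
  also have "\<dots> = Q - 2 * c * I + c\<^sup>2 * L"
    unfolding expand using True f f2
    by (subst integral_add[OF lin integrable_const_ivl])
       (simp add: integral_diff integrable_on_mult_right I_def Q_def L_def)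
  also have "\<dots> = Q - I\<^sup>2 / L"
    using \<open>0 < L\<close> by (simp add: c_def field_simps power2_eq_square)
  finally have "I\<^sup>2 \<le> L * Q"
    using \<open>0 < L\<close> by (simp add: field_simps)
  then show ?thesis by (simp add: I_def Q_def L_def)
next
  case False
  then show ?thesis by (simp add: integral_unique[OF has_integral_null_real])
qed

lemma integral_square_convex_combination:
  fixes f g :: "'a::euclidean_space \<Rightarrow> real"
  assumes "(\<lambda>x. (f x)\<^sup>2) integrable_on S" and "(\<lambda>x. (g x)\<^sup>2) integrable_on S"
    and "(\<lambda>x. (f x - g x)\<^sup>2) integrable_on S"
  shows "integral S (\<lambda>x. (t * f x + (1 - t) * g x)\<^sup>2)
    = t * integral S (\<lambda>x. (f x)\<^sup>2) + (1 - t) * integral S (\<lambda>x. (g x)\<^sup>2)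
      - t * (1 - t) * integral S (\<lambda>x. (f x - g x)\<^sup>2)"
proof -
  have "(\<lambda>x. (t * f x + (1 - t) * g x)\<^sup>2)
      = (\<lambda>x. t * (f x)\<^sup>2 + (1 - t) * (g x)\<^sup>2 - t * (1 - t) * (f x - g x)\<^sup>2)"
    by (simp add: power2_eq_square algebra_simps)
  then show ?thesis
    using assms by (simp add: integral_add integral_diff integrable_add integrable_diff integrable_on_mult_right)
qed

lemma square_integrable_linear_combination:
  fixes f g :: "'a::euclidean_space \<Rightarrow> real"
  assumes "S \<in> sets lebesgue" and f: "f integrable_on S" and g: "g integrable_on S"
    and f2: "(\<lambda>x. (f x)\<^sup>2) integrable_on S" and g2: "(\<lambda>x. (g x)\<^sup>2) integrable_on S"
  shows "(\<lambda>x. (\<alpha> * f x + \<beta> * g x)\<^sup>2) integrable_on S"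
proof (rule measurable_bounded_by_integrable_imp_integrable_real)
  show "(\<lambda>x. (\<alpha> * f x + \<beta> * g x)\<^sup>2) \<in> borel_measurable (lebesgue_on S)"
    using integrable_imp_measurable[OF f] integrable_imp_measurable[OF g] by measurable
  show "(\<lambda>x. 2 * \<alpha>\<^sup>2 * (f x)\<^sup>2 + 2 * \<beta>\<^sup>2 * (g x)\<^sup>2) integrable_on S"
    using f2 g2 by (intro integrable_add integrable_on_mult_right)
  show "\<bar>(\<alpha> * f x + \<beta> * g x)\<^sup>2\<bar> \<le> 2 * \<alpha>\<^sup>2 * (f x)\<^sup>2 + 2 * \<beta>\<^sup>2 * (g x)\<^sup>2" for x
  proof -
    have "0 \<le> (\<alpha> * f x - \<beta> * g x)\<^sup>2" by simp
    then have "(\<alpha> * f x + \<beta> * g x)\<^sup>2 \<le> 2 * \<alpha>\<^sup>2 * (f x)\<^sup>2 + 2 * \<beta>\<^sup>2 * (g x)\<^sup>2"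
      by (simp add: power2_eq_square algebra_simps)
    then show ?thesis by simp
  qed
qed fact

lemma W12T_continuous_on:
  assumes "W12T u g"
  shows "continuous_on {0..1} u"
proof -
  have "g integrable_on {0..1}" using assms unfolding W12T_def by blast
  then have "continuous_on {0..1} (\<lambda>x. u 0 + integral {0..x} g)"
    by (intro continuous_intros indefinite_integral_continuous_1)
  moreover have "\<And>x. x \<in> {0..1} \<Longrightarrow> u 0 + integral {0..x} g = u x"
    using assms unfolding W12T_def by (metis (no_types))
  ultimately show ?thesis using continuous_on_eq by blast
qed

lemma W12T_linear_combination:
  assumes W1: "W12T u1 g1" and W2: "W12T u2 g2"
  shows "W12T (\<lambda>x. \<alpha> * u1 x + \<beta> * u2 x) (\<lambda>x. \<alpha> * g1 x + \<beta> * g2 x)"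
  unfolding W12T_def
proof (intro conjI ballI)
  have g1: "g1 integrable_on {0..1}" "(\<lambda>x. (g1 x)\<^sup>2) integrable_on {0..1}"
    and g2: "g2 integrable_on {0..1}" "(\<lambda>x. (g2 x)\<^sup>2) integrable_on {0..1}"
    using W1 W2 unfolding W12T_def by blast+
  then show "(\<lambda>x. \<alpha> * g1 x + \<beta> * g2 x) integrable_on {0..1}"
    by (intro integrable_add integrable_on_mult_right)
  show "(\<lambda>x. (\<alpha> * g1 x + \<beta> * g2 x)\<^sup>2) integrable_on {0..1}"
    using g1 g2 by (intro square_integrable_linear_combination) auto
  fix x :: real
  assume x: "x \<in> {0..1}"
  then have "{0..x} \<subseteq> {0..1}" by auto
  then have "g1 integrable_on {0..x}" "g2 integrable_on {0..x}"
    using g1 g2 by (auto intro: integrable_on_subinterval)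
  then have "integral {0..x} (\<lambda>y. \<alpha> * g1 y + \<beta> * g2 y) = \<alpha> * integral {0..x} g1 + \<beta> * integral {0..x} g2"
    by (simp add: integral_add integrable_on_mult_right)
  moreover have "u1 x = u1 0 + integral {0..x} g1" and "u2 x = u2 0 + integral {0..x} g2"
    using W1 W2 x unfolding W12T_def by blast+
  ultimately show "\<alpha> * u1 x + \<beta> * u2 x = \<alpha> * u1 0 + \<beta> * u2 0 + integral {0..x} (\<lambda>y. \<alpha> * g1 y + \<beta> * g2 y)"
    by (simp add: algebra_simps)
next
  show "\<alpha> * u1 0 + \<beta> * u2 0 = \<alpha> * u1 1 + \<beta> * u2 1"
    using W1 W2 unfolding W12T_def by metis
qed

lemma W12T_diff:
  assumes "W12T u1 g1" and "W12T u2 g2"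
  shows "W12T (\<lambda>x. u1 x - u2 x) (\<lambda>x. g1 x - g2 x)"
  using W12T_linear_combination[OF assms, of 1 "-1"] by simp

lemma W12T_integral_square_nonneg:
  assumes "W12T u g"
  shows "0 \<le> integral {0..1} (\<lambda>x. (g x)\<^sup>2)"
proof -
  have "(\<lambda>x. (g x)\<^sup>2) integrable_on {0..1}" using assms unfolding W12T_def by blast
  then show ?thesis by (rule integral_nonneg) simp
qed

lemma W12T_abs_increment_le:
  assumes "W12T u g" and x: "x \<in> {0..1}"
  shows "\<bar>u x - u 0\<bar> \<le> sqrt (integral {0..1} (\<lambda>y. (g y)\<^sup>2))"
proof -
  have g: "g integrable_on {0..1}" and g2: "(\<lambda>y. (g y)\<^sup>2) integrable_on {0..1}"
    using assms unfolding W12T_def by blast+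
  have sub: "{0..x} \<subseteq> {0..1}" using x by auto
  have g2x: "(\<lambda>y. (g y)\<^sup>2) integrable_on {0..x}"
    using g2 sub by (rule integrable_on_subinterval)
  have "0 \<le> integral {0..x} (\<lambda>y. (g y)\<^sup>2)" using g2x by (rule integral_nonneg) simp
  have "u x = u 0 + integral {0..x} g"
    using assms unfolding W12T_def by blast
  then have "(u x - u 0)\<^sup>2 = (integral {0..x} g)\<^sup>2" by simp
  also have "\<dots> \<le> (x - 0) * integral {0..x} (\<lambda>y. (g y)\<^sup>2)"
    using integrable_on_subinterval[OF g sub] g2x by (rule square_integral_le_integral_square)
  also have "\<dots> \<le> integral {0..x} (\<lambda>y. (g y)\<^sup>2)"
    using x \<open>0 \<le> integral {0..x} (\<lambda>y. (g y)\<^sup>2)\<close> by (simp add: mult_left_le_one_le)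
  also have "\<dots> \<le> integral {0..1} (\<lambda>y. (g y)\<^sup>2)"
    using sub g2x g2 by (rule integral_subset_le) simp
  finally have "sqrt ((u x - u 0)\<^sup>2) \<le> sqrt (integral {0..1} (\<lambda>y. (g y)\<^sup>2))"
    by (rule real_sqrt_le_mono)
  then show ?thesis by simp
qed

lemma W12T_ln_integral_exp_convexity_defect_le:
  assumes W1: "W12T u1 g1" and W2: "W12T u2 g2" and "0 \<le> t" and "t \<le> 1"
  shows "t * ln (integral {0..1} (\<lambda>x. exp (u1 x))) + (1 - t) * ln (integral {0..1} (\<lambda>x. exp (u2 x)))
    \<le> ln (integral {0..1} (\<lambda>x. exp (t * u1 x + (1 - t) * u2 x)))
      + t * (1 - t) * (integral {0..1} (\<lambda>x. (g1 x - g2 x)\<^sup>2) / 2)"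
proof -
  define Gd where "Gd = integral {0..1} (\<lambda>x. (g1 x - g2 x)\<^sup>2)"
  define r where "r = sqrt Gd"
  define a where "a = u1 0 - u2 0 - r"
  define b where "b = u1 0 - u2 0 + r"
  have range: "a \<le> u1 x - u2 x \<and> u1 x - u2 x \<le> b" if "x \<in> {0..1}" for x
  proof -
    have "\<bar>(u1 x - u2 x) - (u1 0 - u2 0)\<bar> \<le> r"
      using W12T_abs_increment_le[OF W12T_diff[OF W1 W2] that] unfolding r_def Gd_def .
    then show ?thesis unfolding a_def b_def by linarith
  qed
  have "r\<^sup>2 = Gd"
    using W12T_integral_square_nonneg[OF W12T_diff[OF W1 W2]] unfolding r_def Gd_def by simp
  then have "(b - a)\<^sup>2 / 8 = Gd / 2"
    unfolding a_def b_def by (simp add: power2_eq_square algebra_simps)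
  then have width: "t * (1 - t) * (b - a)\<^sup>2 / 8 = t * (1 - t) * (Gd / 2)"
    by (simp only: times_divide_eq_right[symmetric])
  have "t * ln (integral {0..1} (\<lambda>x. exp (u1 x))) + (1 - t) * ln (integral {0..1} (\<lambda>x. exp (u2 x)))
    \<le> ln (integral {0..1} (\<lambda>x. exp (t * u1 x + (1 - t) * u2 x))) + t * (1 - t) * (b - a)\<^sup>2 / 8"
    by (rule ln_integral_exp_convexity_defect_le[OF zero_less_one W12T_continuous_on[OF W1]
          W12T_continuous_on[OF W2] range \<open>0 \<le> t\<close> \<open>t \<le> 1\<close>])
  then show ?thesis unfolding Gd_def[symmetric] width .
qed

lemma Jfun_convex_combination_le:
  fixes D \<kappa> t :: real
  assumes W1: "W12T u1 g1" and W2: "W12T u2 g2" and "0 \<le> t" and "t \<le> 1" and "0 \<le> \<kappa>"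
  shows "Jfun D \<kappa> (\<lambda>x. t * u1 x + (1 - t) * u2 x) (\<lambda>x. t * g1 x + (1 - t) * g2 x)
    \<le> t * Jfun D \<kappa> u1 g1 + (1 - t) * Jfun D \<kappa> u2 g2
      - t * (1 - t) * (D - \<kappa>) / 2 * integral {0..1} (\<lambda>x. (g1 x - g2 x)\<^sup>2)"
proof -
  define Gd where "Gd = integral {0..1} (\<lambda>x. (g1 x - g2 x)\<^sup>2)"
  define Z where "Z = integral {0..1} (\<lambda>x. exp (t * u1 x + (1 - t) * u2 x))"
  define Z1 where "Z1 = integral {0..1} (\<lambda>x. exp (u1 x))"
  define Z2 where "Z2 = integral {0..1} (\<lambda>x. exp (u2 x))"
  define U where "U = integral {0..1} (\<lambda>x. (t * u1 x + (1 - t) * u2 x)\<^sup>2)"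
  define U1 where "U1 = integral {0..1} (\<lambda>x. (u1 x)\<^sup>2)"
  define U2 where "U2 = integral {0..1} (\<lambda>x. (u2 x)\<^sup>2)"
  define G where "G = integral {0..1} (\<lambda>x. (t * g1 x + (1 - t) * g2 x)\<^sup>2)"
  define G1 where "G1 = integral {0..1} (\<lambda>x. (g1 x)\<^sup>2)"
  define G2 where "G2 = integral {0..1} (\<lambda>x. (g2 x)\<^sup>2)"
  have J: "Jfun D \<kappa> (\<lambda>x. t * u1 x + (1 - t) * u2 x) (\<lambda>x. t * g1 x + (1 - t) * g2 x)
        = D / 2 * G + 1 / 2 * U - \<kappa> * ln Z"
    and J1: "Jfun D \<kappa> u1 g1 = D / 2 * G1 + 1 / 2 * U1 - \<kappa> * ln Z1"
    and J2: "Jfun D \<kappa> u2 g2 = D / 2 * G2 + 1 / 2 * U2 - \<kappa> * ln Z2"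
    by (simp_all only: Jfun_def G_def G1_def G2_def U_def U1_def U2_def Z_def Z1_def Z2_def)
  have "(\<lambda>x. (g1 x)\<^sup>2) integrable_on {0..1}" "(\<lambda>x. (g2 x)\<^sup>2) integrable_on {0..1}"
    "(\<lambda>x. (g1 x - g2 x)\<^sup>2) integrable_on {0..1}"
    using W1 W2 W12T_diff[OF W1 W2] unfolding W12T_def by blast+
  then have gradient: "G = t * G1 + (1 - t) * G2 - t * (1 - t) * Gd"
    unfolding G_def G1_def G2_def Gd_def by (rule integral_square_convex_combination)
  have u_sq: "(\<lambda>x. (u1 x)\<^sup>2) integrable_on {0..1}" "(\<lambda>x. (u2 x)\<^sup>2) integrable_on {0..1}"
    "(\<lambda>x. (u1 x - u2 x)\<^sup>2) integrable_on {0..1}"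
    using W12T_continuous_on[OF W1] W12T_continuous_on[OF W2]
    by (auto intro!: integrable_continuous_interval continuous_intros)
  then have "U = t * U1 + (1 - t) * U2 - t * (1 - t) * integral {0..1} (\<lambda>x. (u1 x - u2 x)\<^sup>2)"
    unfolding U_def U1_def U2_def by (rule integral_square_convex_combination)
  moreover have "0 \<le> integral {0..1} (\<lambda>x. (u1 x - u2 x)\<^sup>2)"
    using u_sq(3) by (rule integral_nonneg) simp
  ultimately have "0 \<le> (t * U1 + (1 - t) * U2 - U) / 2"
    using \<open>0 \<le> t\<close> \<open>t \<le> 1\<close> by simp
  moreover have "0 \<le> \<kappa> * (ln Z + t * (1 - t) * (Gd / 2) - (t * ln Z1 + (1 - t) * ln Z2))"
    using W12T_ln_integral_exp_convexity_defect_le[OF W1 W2 \<open>0 \<le> t\<close> \<open>t \<le> 1\<close>] \<open>0 \<le> \<kappa>\<close>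
    by (simp add: Z_def Z1_def Z2_def Gd_def)
  moreover have "t * Jfun D \<kappa> u1 g1 + (1 - t) * Jfun D \<kappa> u2 g2 - t * (1 - t) * (D - \<kappa>) / 2 * Gd
      - Jfun D \<kappa> (\<lambda>x. t * u1 x + (1 - t) * u2 x) (\<lambda>x. t * g1 x + (1 - t) * g2 x)
      = (t * U1 + (1 - t) * U2 - U) / 2
        + \<kappa> * (ln Z + t * (1 - t) * (Gd / 2) - (t * ln Z1 + (1 - t) * ln Z2))"
    unfolding J J1 J2 gradient by (simp add: field_simps)
  ultimately show ?thesis
    unfolding Gd_def by linarith
qed

lemma J_globally_convex_if_kappa_le:
  assumes "0 \<le> \<kappa>" and "\<kappa> \<le> D"
  shows "J_globally_convex D \<kappa>"
  unfolding J_globally_convex_def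
proof (intro allI impI)
  fix u1 g1 u2 g2 and t :: real
  assume W1: "W12T u1 g1" and W2: "W12T u2 g2" and "0 \<le> t" "t \<le> 1"
  have "0 \<le> t * (1 - t) * (D - \<kappa>) / 2 * integral {0..1} (\<lambda>x. (g1 x - g2 x)\<^sup>2)"
    using W12T_integral_square_nonneg[OF W12T_diff[OF W1 W2]] \<open>0 \<le> t\<close> \<open>t \<le> 1\<close> \<open>\<kappa> \<le> D\<close>
    by (intro mult_nonneg_nonneg divide_nonneg_pos) auto
  then show "Jfun D \<kappa> (\<lambda>x. t * u1 x + (1 - t) * u2 x) (\<lambda>x. t * g1 x + (1 - t) * g2 x)
      \<le> t * Jfun D \<kappa> u1 g1 + (1 - t) * Jfun D \<kappa> u2 g2"
    using Jfun_convex_combination_le[OF W1 W2 \<open>0 \<le> t\<close> \<open>t \<le> 1\<close> \<open>0 \<le> \<kappa>\<close>, of D] by linarith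
qed

theorem mainTheorem5:
  fixes \<kappa> :: real
  assumes "\<kappa> > 0"
  shows "\<exists>Dmax. \<forall>D. D > 0 \<longrightarrow> D > Dmax \<longrightarrow> J_globally_convex D \<kappa>"
  using assms by (intro exI[of _ \<kappa>] allI impI J_globally_convex_if_kappa_le) auto

end
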